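(* For every $m\ge1$, the ideal $I^{(k,r)}_m\subset V$ is stable under $\mathcal H_n^{(k,r)}$, i.e. it is a subrepresentation of $V$. (One has $I^{(k,r)}_1=I^{(k,r)}\subset I^{(k,r)}_2\subset\cdots\subset I^{(k,r)}_{m_0+1}=V$ with $m_0=[\frac n{k+1}]$.)
   Context: Let $\tilde{\mathbb K}=\mathbb C(t^{1/2},q)$. The double affine Hecke algebra $\mathcal H_n$ of type $GL_n$ is the $\tilde{\mathbb K}$-algebra generated by $X_i^{\pm1},Y_i^{\pm1}$ ($1\le i\le n$), $T_j$ ($1\le j\le n-1$) with relations: $X$'s commute, $Y$'s commute; $(T_i-t^{1/2})(T_i+t^{-1/2})=0$; braid relations for the $T_i$; $T_iX_iT_i=X_{i+1}$; $T_iX_j=X_jT_i$ ($j\ne i,i+1$); $T_i^{-1}Y_iT_i^{-1}=Y_{i+1}$; $T_iY_j=Y_jT_i$ ($j\ne i,i+1$); $Y_2^{-1}X_1Y_2X_1^{-1}=T_1^2$; $Y_i\tilde X=q\tilde XY_i$ ($\tilde X=\prod X_i$); $X_i\tilde Y=q^{-1}\tilde YX_i$ ($\tilde Y=\prod Y_i$). It acts on $U=\tilde{\mathbb K}[x_1^{\pm1},\dots,x_n^{\pm1}]$ by $X_i\mapsto x_i$, $T_i\mapsto t^{1/2}s_i+\frac{t^{1/2}-t^{-1/2}}{x_i/x_{i+1}-1}(s_i-1)$, $Y_i\mapsto T_i\cdots T_{n-1}\omega T_1^{-1}\cdots T_{i-1}^{-1}$, with $s_i$ swapping $x_i,x_{i+1}$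 and $(\omega f)(x)=f(qx_n,x_1,\dots,x_{n-1})$. Fix $1\le k\le n-1$, $r\ge2$, $g=\gcd(k+1,r-1)$, $\tau=e^{2\pi\sqrt{-1}/(r-1)}$, specialization $(\ast)$: $t=u^{(r-1)/g}$, $q=\tau u^{-(k+1)/g}$. $\mathbb K$, $\mathcal H_n^{(k,r)}$, $V=\mathbb K[x_1^{\pm1},\dots,x_n^{\pm1}]$ are the images under $(\ast)$ of the elements of $\tilde{\mathbb K}$, $\mathcal H_n$, $U$ regular at $(\ast)$. $Z^{(k,r)}_m$ is the set of $z\in\mathbb K^n$ for which there exist pairwise distinct indices $i_{l,a}$ ($1\le l\le m$, $1\le a\le k+1$) and $s_{l,a}\in\mathbb Z_{\ge0}$ ($1\le a\le k$) with $z_{i_{l,a+1}}=z_{i_{l,a}}tq^{s_{l,a}}$, $\sum_{a=1}^ks_{l,a}\le r-2$ for each $l$, and $i_{l,a}<i_{l,a+1}$ whenever $s_{l,a}=0$; $I^{(k,r)}_m=\{f\in V:f(z)=0\ \forall z\in Z^{(k,r)}_m\}$, and $I^{(k,r)}=I^{(k,r)}_1$. *)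

theory Defs
  imports Complex_Main "HOL-Library.Poly_Mapping"
    "HOL-Computational_Algebra.Polynomial" "HOL-Computational_Algebra.Fraction_Field"
begin

text \<open>K is the image of C(t^(1/2),q) under the specialization
  t = u^((r-1)/g), q = tau u^(-(k+1)/g).  Writing w = u^(1/(2g)) this image is
  C(w^(r-1), w^(2(k+1))) = C(v) with v = w^d, d = gcd(r-1, 2(k+1)); we model K
  as the rational function field C(v) = complex poly fract, in which
  t^(1/2) = v^((r-1)/d) and q = tau v^(-2(k+1)/d).\<close>

type_synonym kf = "complex poly fract"

definition vvar :: kf where "vvar = Fract [:0, 1:] 1"

definition kconst :: "complex \<Rightarrow> kf" where "kconst c = Fract [:c:] 1"

definition dd :: "nat \<Rightarrow> nat \<Rightarrow> nat" where
  "dd k r = gcd (r - 1) (2 * (k + 1))"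

definition gg :: "nat \<Rightarrow> nat \<Rightarrow> nat" where
  "gg k r = gcd (k + 1) (r - 1)"

definition tau :: "nat \<Rightarrow> complex" where
  "tau r = exp (2 * pi * \<i> / of_nat (r - 1))"

definition sqt :: "nat \<Rightarrow> nat \<Rightarrow> kf" where
  "sqt k r = vvar ^ ((r - 1) div dd k r)"

definition tt :: "nat \<Rightarrow> nat \<Rightarrow> kf" where
  "tt k r = (sqt k r)^2"

definition qq :: "nat \<Rightarrow> nat \<Rightarrow> kf" where
  "qq k r = kconst (tau r) * inverse (vvar ^ ((2 * (k + 1)) div dd k r))"

type_synonym lpoly = "(nat \<Rightarrow>\<^sub>0 int) \<Rightarrow>\<^sub>0 kf"

definition lconst :: "kf \<Rightarrow> lpoly" where
  "lconst c = Poly_Mapping.single 0 c"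

definition xpow :: "nat \<Rightarrow> int \<Rightarrow> lpoly" where
  "xpow j c = Poly_Mapping.single (Poly_Mapping.single j c) 1"

definition xv :: "nat \<Rightarrow> lpoly" where "xv j = xpow j 1"

definition Vset :: "nat \<Rightarrow> lpoly set" where
  "Vset n = {f. \<forall>e \<in> Poly_Mapping.keys f. Poly_Mapping.keys e \<subseteq> {1..n}}"

definition leval :: "nat \<Rightarrow> lpoly \<Rightarrow> (nat \<Rightarrow> kf) \<Rightarrow> kf" where
  "leval n f z = (\<Sum>e \<in> Poly_Mapping.keys f. Poly_Mapping.lookup f e * (\<Prod>i \<in> {1..n}. z i powi Poly_Mapping.lookup e i))"

definition msubst :: "(nat \<Rightarrow> nat) \<Rightarrow> ((nat \<Rightarrow>\<^sub>0 int) \<Rightarrow> kf) \<Rightarrow> lpoly \<Rightarrow> lpoly" where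
  "msubst \<sigma> coef f = (\<Sum>e \<in> Poly_Mapping.keys f. lconst (Poly_Mapping.lookup f e * coef e) *
                          (\<Prod>j \<in> Poly_Mapping.keys e. xpow (\<sigma> j) (Poly_Mapping.lookup e j)))"

definition swp :: "nat \<Rightarrow> nat \<Rightarrow> nat" where
  "swp i j = (if j = i then i + 1 else if j = i + 1 then i else j)"

definition sop :: "nat \<Rightarrow> lpoly \<Rightarrow> lpoly" where
  "sop i f = msubst (swp i) (\<lambda>_. 1) f"

text \<open>(\<omega> f)(x) = f(q x_n, x_1, ..., x_(n-1)):  x_1 \<mapsto> q x_n, x_j \<mapsto> x_(j-1)\<close>
definition omega :: "nat \<Rightarrow> nat \<Rightarrow> nat \<Rightarrow> lpoly \<Rightarrow> lpoly" where
  "omega n k r f = msubst (\<lambda>j. if j = 1 then n else j - 1)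
                      (\<lambda>e. qq k r powi Poly_Mapping.lookup e 1) f"

text \<open>inverse of \<omega>: (\<omega>^-1 f)(x) = f(x_2, ..., x_n, q^-1 x_1)\<close>
definition omega_inv :: "nat \<Rightarrow> nat \<Rightarrow> nat \<Rightarrow> lpoly \<Rightarrow> lpoly" where
  "omega_inv n k r f = msubst (\<lambda>j. if j = n then 1 else j + 1)
                      (\<lambda>e. qq k r powi (- Poly_Mapping.lookup e n)) f"

text \<open>T_i = t^(1/2) s_i + (t^(1/2) - t^(-1/2)) / (x_i/x_(i+1) - 1) (s_i - 1);
  the division is the exact division
  (s_i - 1) f / (x_i/x_(i+1) - 1) = x_(i+1) (s_i f - f) / (x_i - x_(i+1)).\<close>
definition Top :: "nat \<Rightarrow> nat \<Rightarrow> nat \<Rightarrow> lpoly \<Rightarrow> lpoly" where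
  "Top k r i f = lconst (sqt k r) * sop i f +
     lconst (sqt k r - inverse (sqt k r)) *
       (THE g. (xv i - xv (i + 1)) * g = xv (i + 1) * (sop i f - f))"

text \<open>T_i^-1 = T_i - (t^(1/2) - t^(-1/2)) (from the quadratic relation)\<close>
definition Tinv :: "nat \<Rightarrow> nat \<Rightarrow> nat \<Rightarrow> lpoly \<Rightarrow> lpoly" where
  "Tinv k r i f = Top k r i f - lconst (sqt k r - inverse (sqt k r)) * f"

definition Xop :: "nat \<Rightarrow> lpoly \<Rightarrow> lpoly" where "Xop i f = xpow i 1 * f"
definition Xinv :: "nat \<Rightarrow> lpoly \<Rightarrow> lpoly" where "Xinv i f = xpow i (-1) * f"

definition Yop :: "nat \<Rightarrow> nat \<Rightarrow> nat \<Rightarrow> nat \<Rightarrow> lpoly \<Rightarrow> lpoly" where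
  "Yop n k r i = foldr (\<circ>) (map (Top k r) [i..<n]) id \<circ> omega n k r \<circ>
                 foldr (\<circ>) (map (Tinv k r) [1..<i]) id"

definition Yinv :: "nat \<Rightarrow> nat \<Rightarrow> nat \<Rightarrow> nat \<Rightarrow> lpoly \<Rightarrow> lpoly" where
  "Yinv n k r i = foldr (\<circ>) (map (Top k r) (rev [1..<i])) id \<circ> omega_inv n k r \<circ>
                  foldr (\<circ>) (map (Tinv k r) (rev [i..<n])) id"

text \<open>The operators by which H_n^(k,r) acts on V: the K-algebra of operators
  generated by the images of X_i^{\<pm>1}, T_j, Y_i^{\<pm>1}.\<close>
inductive_set hecke_ops :: "nat \<Rightarrow> nat \<Rightarrow> nat \<Rightarrow> (lpoly \<Rightarrow> lpoly) set"
  for n k r where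
  gen_X: "i \<in> {1..n} \<Longrightarrow> Xop i \<in> hecke_ops n k r"
| gen_Xinv: "i \<in> {1..n} \<Longrightarrow> Xinv i \<in> hecke_ops n k r"
| gen_T: "j \<in> {1..n-1} \<Longrightarrow> Top k r j \<in> hecke_ops n k r"
| gen_Y: "i \<in> {1..n} \<Longrightarrow> Yop n k r i \<in> hecke_ops n k r"
| gen_Yinv: "i \<in> {1..n} \<Longrightarrow> Yinv n k r i \<in> hecke_ops n k r"
| scal: "(\<lambda>f. lconst c * f) \<in> hecke_ops n k r"
| add: "h1 \<in> hecke_ops n k r \<Longrightarrow> h2 \<in> hecke_ops n k r \<Longrightarrow>
        (\<lambda>f. h1 f + h2 f) \<in> hecke_ops n k r"
| comp: "h1 \<in> hecke_ops n k r \<Longrightarrow> h2 \<in> hecke_ops n k r \<Longrightarrow>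
        h1 \<circ> h2 \<in> hecke_ops n k r"

definition Zset :: "nat \<Rightarrow> nat \<Rightarrow> nat \<Rightarrow> nat \<Rightarrow> (nat \<Rightarrow> kf) set" where
  "Zset n k r m = {z. (\<forall>i \<in> {1..n}. z i \<noteq> 0) \<and>
     (\<exists>(idx :: nat \<Rightarrow> nat \<Rightarrow> nat) (s :: nat \<Rightarrow> nat \<Rightarrow> nat).
        inj_on (\<lambda>(l, a). idx l a) ({1..m} \<times> {1..k+1}) \<and>
        (\<forall>l \<in> {1..m}. \<forall>a \<in> {1..k+1}. idx l a \<in> {1..n}) \<and>
        (\<forall>l \<in> {1..m}. \<forall>a \<in> {1..k}.
            z (idx l (a + 1)) = z (idx l a) * tt k r * qq k r ^ s l a) \<and>
        (\<forall>l \<in> {1..m}. (\<Sum>a = 1..k. s l a) \<le> r - 2) \<and>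
        (\<forall>l \<in> {1..m}. \<forall>a \<in> {1..k}. s l a = 0 \<longrightarrow> idx l a < idx l (a + 1)))}"

definition Iideal :: "nat \<Rightarrow> nat \<Rightarrow> nat \<Rightarrow> nat \<Rightarrow> lpoly set" where
  "Iideal n k r m = {f \<in> Vset n. \<forall>z \<in> Zset n k r m. leval n f z = 0}"

end

theory Submission
  imports Defs "HOL-Analysis.Complex_Transcendental"
begin

text \<open>Since \<open>I\<^sub>m\<close> is cut out by vanishing on \<open>Z\<^sub>m\<close>, it suffices that each generator acts
  compatibly with \<open>Z\<^sub>m\<close>. Multiplication by \<open>x\<^sub>i\<^sup>\<plusminus>\<^sup>1\<close> is harmless. The operator \<open>\<omega>\<close> acts on
  points by a cyclic shift with a factor \<open>q\<close>, and maps \<open>Z\<^sub>m\<close> to itself because of the wheel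
  condition \<open>t\<^sup>k\<^sup>+\<^sup>1 q\<^sup>r\<^sup>-\<^sup>1 = 1\<close>: a chain ending at \<open>x\<^sub>n\<close> wraps around to the front; \<open>\<omega>\<^sup>-\<^sup>1\<close> acts
  as a power of \<open>\<omega>\<close> up to scaling.

  For \<open>T\<^sub>i\<close>, write \<open>T\<^sub>i f = t\<^sup>1\<^sup>/\<^sup>2 s\<^sub>i f + (t\<^sup>1\<^sup>/\<^sup>2 - t\<^sup>-\<^sup>1\<^sup>/\<^sup>2) g\<close> with
  \<open>(x\<^sub>i - x\<^sub>i\<^sub>+\<^sub>1) g = x\<^sub>i\<^sub>+\<^sub>1 (s\<^sub>i f - f)\<close>. If \<open>x\<^sub>i, x\<^sub>i\<^sub>+\<^sub>1\<close> is a link with exponent 0 in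
  a chain of \<open>z \<in> Z\<^sub>m\<close>, the two terms cancel at \<open>z\<close>. Otherwise \<open>s\<^sub>i z \<in> Z\<^sub>m\<close>, so \<open>f(s\<^sub>i z) = 0\<close>, and \<open>g(z) = 0\<close>:
  directly if \<open>z\<^sub>i \<noteq> z\<^sub>i\<^sub>+\<^sub>1\<close>, and otherwise by rescaling the chain through \<open>x\<^sub>i\<close> by a parameter,
  which stays in \<open>Z\<^sub>m\<close> and separates \<open>z\<^sub>i\<close> from \<open>z\<^sub>i\<^sub>+\<^sub>1\<close> (genericity of \<open>t, q\<close> keeps
  \<open>x\<^sub>i\<^sub>+\<^sub>1\<close> off that chain): then \<open>g\<close> vanishes for all parameter values except \<open>0\<close> and
  \<open>1\<close>, hence, being a Laurent polynomial in the parameter, also at \<open>1\<close>.\<close>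

section \<open>The specialized parameters\<close>

lemma vvar_power: "vvar ^ a = Fract ([:0, 1:] ^ a) 1"
  by (induct a) (simp_all add: vvar_def mult_fract One_fract_def)

lemma vvar_nonzero: "vvar \<noteq> 0"
  by (simp add: vvar_def Zero_fract_def eq_fract)

lemma kconst_mult: "kconst (a * b) = kconst a * kconst b"
  by (simp add: kconst_def mult_fract mult.commute)

lemma kconst_0: "kconst 0 = 0"
  by (simp add: kconst_def Zero_fract_def)

lemma kconst_1: "kconst 1 = 1"
  by (simp add: kconst_def One_fract_def one_pCons)

lemma kconst_power: "kconst (a ^ j) = kconst a ^ j"
  by (induct j) (simp_all add: kconst_1 kconst_mult)

lemma inj_kconst: "inj kconst"
  by (rule injI) (simp add: kconst_def eq_fract)

lemma infinite_UNIV_kf: "infinite (UNIV :: kf set)"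
proof
  assume "finite (UNIV :: kf set)"
  hence "finite (range kconst)" by (rule finite_subset[rotated]) auto
  hence "finite (UNIV :: complex set)" using inj_kconst finite_imageD by blast
  thus False using infinite_UNIV_char_0 by blast
qed

lemma kconst_mult_vvar_power_eqD:
  assumes "kconst c * vvar ^ a = vvar ^ b"
  shows "a = b \<and> c = 1"
proof -
  have "Fract ([:c:] * [:0, 1:] ^ a) 1 = Fract ([:0, 1:] ^ b) 1"
    using assms by (simp add: kconst_def vvar_power mult_fract)
  hence "monom c a = monom 1 b" by (simp add: eq_fract monom_altdef)
  hence "coeff (monom c a) b = 1" by simp
  thus ?thesis by (auto simp: coeff_monom split: if_splits)
qed

lemma dd_pos: "dd k r > 0"
  by (simp add: dd_def)

lemma tau_power_eq_1_iff: "2 \<le> r \<Longrightarrow> tau r ^ j = 1 \<longleftrightarrow> (r - 1) dvd j"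
  using complex_root_unity_eq_1[of "r - 1" j]
  by (simp add: tau_def exp_of_nat_mult[symmetric] field_simps)

lemma tt_power_mult_qq_power:
  "tt k r ^ j * qq k r ^ S =
   kconst (tau r ^ S) * vvar ^ (2 * ((r - 1) div dd k r) * j)
     * inverse (vvar ^ ((2 * (k + 1)) div dd k r * S))"
  by (simp add: tt_def sqt_def qq_def power_mult_distrib kconst_power power_mult[symmetric]
      power_inverse mult_ac)

text \<open>Genericity of the specialization; it keeps the points of a chain distinct.\<close>
lemma tt_power_mult_qq_power_neq_1:
  assumes r: "2 \<le> r" and j: "1 \<le> j" and S: "S \<le> r - 2"
  shows "tt k r ^ j * qq k r ^ S \<noteq> 1"
proof
  assume "tt k r ^ j * qq k r ^ S = 1"
  hence "kconst (tau r ^ S) * vvar ^ (2 * ((r - 1) div dd k r) * j)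
           = vvar ^ ((2 * (k + 1)) div dd k r * S)"
    unfolding tt_power_mult_qq_power by (metis inverse_unique inverse_inverse_eq)
  from kconst_mult_vvar_power_eqD[OF this]
  have e: "2 * ((r - 1) div dd k r) * j = (2 * (k + 1)) div dd k r * S"
    and "tau r ^ S = 1" by auto
  hence "(r - 1) dvd S" using r tau_power_eq_1_iff by blast
  with S r have "S = 0" by (cases "S = 0") (auto dest: dvd_imp_le)
  with e j have "(r - 1) div dd k r = 0" by simp
  moreover have "dd k r \<le> r - 1" using r by (simp add: dd_def dvd_imp_le)
  ultimately show False using dd_pos[of k r] by (simp add: div_eq_0_iff)
qed

lemma tt_neq_1: "2 \<le> r \<Longrightarrow> tt k r \<noteq> 1"
  using tt_power_mult_qq_power_neq_1[of r 1 0 k] by simp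

lemma sqt_nonzero: "sqt k r \<noteq> 0"
  by (simp add: sqt_def vvar_nonzero)

lemma qq_nonzero: "qq k r \<noteq> 0"
proof -
  have "kconst (tau r) \<noteq> kconst 0" using inj_kconst by (auto dest: injD simp: tau_def)
  thus ?thesis by (simp add: qq_def vvar_nonzero kconst_0)
qed

text \<open>The wheel condition; it is what makes \<open>\<omega>\<close> preserve \<open>Z\<^sub>m\<close>.\<close>
lemma tt_power_mult_qq_power_wheel:
  assumes r: "2 \<le> r"
  shows "tt k r ^ (k + 1) * qq k r ^ (r - 1) = 1"
proof -
  have t: "tau r ^ (r - 1) = 1" using tau_power_eq_1_iff[OF r] by simp
  obtain a where a: "r - 1 = dd k r * a" by (metis dd_def dvd_def gcd_dvd1)
  obtain b where b: "2 * (k + 1) = dd k r * b" by (metis dd_def dvd_def gcd_dvd2)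
  have "dd k r * (2 * a * (k + 1)) = dd k r * (b * (r - 1))"
    by (metis a b mult.commute mult.left_commute)
  hence ab: "2 * a * (k + 1) = b * (r - 1)" using dd_pos[of k r] by simp
  have a': "(r - 1) div dd k r = a" and b': "(2 * (k + 1)) div dd k r = b"
    unfolding a b using dd_pos[of k r] by simp_all
  have "tt k r ^ (k + 1) * qq k r ^ (r - 1)
          = kconst 1 * vvar ^ (b * (r - 1)) * inverse (vvar ^ (b * (r - 1)))"
    unfolding tt_power_mult_qq_power t a' b' ab by (simp only:)
  thus ?thesis using vvar_nonzero by (simp add: kconst_1)
qed

section \<open>Evaluation of Laurent polynomials\<close>

definition lin_ext :: "('m \<Rightarrow> 'a::comm_ring_1) \<Rightarrow> ('m \<Rightarrow>\<^sub>0 'a) \<Rightarrow> 'a" where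
  "lin_ext \<phi> f = (\<Sum>e \<in> Poly_Mapping.keys f. Poly_Mapping.lookup f e * \<phi> e)"

lemma lin_ext_add: "lin_ext \<phi> (f + g) = lin_ext \<phi> f + lin_ext \<phi> g"
  unfolding lin_ext_def by (rule setsum_keys_plus_distrib) (auto simp: algebra_simps)

lemma lin_ext_0: "lin_ext \<phi> 0 = 0"
  by (simp add: lin_ext_def)

lemma lin_ext_single: "lin_ext \<phi> (Poly_Mapping.single e c) = c * \<phi> e"
  by (simp add: lin_ext_def)

lemma lin_ext_diff: "lin_ext \<phi> (f - g) = lin_ext \<phi> f - lin_ext \<phi> g"
  using lin_ext_add[of \<phi> "f - g" g] by simp

lemma lin_ext_sum: "lin_ext \<phi> (\<Sum>i\<in>I. F i) = (\<Sum>i\<in>I. lin_ext \<phi> (F i))"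
  by (induct I rule: infinite_finite_induct) (simp_all add: lin_ext_0 lin_ext_add)

lemma poly_mapping_sum_single:
  "f = (\<Sum>e \<in> Poly_Mapping.keys f. Poly_Mapping.single e (Poly_Mapping.lookup f e))"
proof (rule poly_mapping_eqI)
  fix k
  have "Poly_Mapping.lookup
          (\<Sum>e \<in> Poly_Mapping.keys f. Poly_Mapping.single e (Poly_Mapping.lookup f e)) k
     = (\<Sum>e \<in> Poly_Mapping.keys f. (if e = k then Poly_Mapping.lookup f e else 0))"
    by (simp add: lookup_sum lookup_single when_def)
  also have "\<dots> = Poly_Mapping.lookup f k"
    by (simp add: in_keys_iff)
  finally show "Poly_Mapping.lookup f k = Poly_Mapping.lookup
          (\<Sum>e \<in> Poly_Mapping.keys f. Poly_Mapping.single e (Poly_Mapping.lookup f e)) k" by simp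
qed

lemma lin_ext_mult:
  fixes \<phi> :: "'m::monoid_add \<Rightarrow> 'a::comm_ring_1"
  assumes hom: "\<And>a b. \<phi> (a + b) = \<phi> a * \<phi> b"
  shows "lin_ext \<phi> (f * g) = lin_ext \<phi> f * lin_ext \<phi> g"
proof -
  let ?A = "Poly_Mapping.keys f" and ?B = "Poly_Mapping.keys g"
  let ?f = "Poly_Mapping.lookup f" and ?g = "Poly_Mapping.lookup g"
  have "f * g = (\<Sum>a\<in>?A. Poly_Mapping.single a (?f a)) * (\<Sum>b\<in>?B. Poly_Mapping.single b (?g b))"
    using poly_mapping_sum_single[of f] poly_mapping_sum_single[of g] by simp
  also have "\<dots> = (\<Sum>a\<in>?A. \<Sum>b\<in>?B. Poly_Mapping.single (a + b) (?f a * ?g b))"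
    by (simp add: sum_distrib_left sum_distrib_right mult_single) (rule sum.swap)
  finally have "lin_ext \<phi> (f * g) = (\<Sum>a\<in>?A. \<Sum>b\<in>?B. (?f a * \<phi> a) * (?g b * \<phi> b))"
    by (simp add: lin_ext_sum lin_ext_single hom mult_ac)
  also have "\<dots> = lin_ext \<phi> f * lin_ext \<phi> g"
    by (simp add: lin_ext_def sum_distrib_left sum_distrib_right) (rule sum.swap)
  finally show ?thesis .
qed

definition nonzero_point :: "nat \<Rightarrow> (nat \<Rightarrow> kf) \<Rightarrow> bool" where
  "nonzero_point n z \<longleftrightarrow> (\<forall>i \<in> {1..n}. z i \<noteq> 0)"

definition monomial_at :: "nat \<Rightarrow> (nat \<Rightarrow> kf) \<Rightarrow> (nat \<Rightarrow>\<^sub>0 int) \<Rightarrow> kf" where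
  "monomial_at n z e = (\<Prod>i \<in> {1..n}. z i powi Poly_Mapping.lookup e i)"

lemma leval_eq_lin_ext: "leval n f z = lin_ext (monomial_at n z) f"
  by (simp add: leval_def lin_ext_def monomial_at_def)

lemma monomial_at_add:
  "nonzero_point n z \<Longrightarrow> monomial_at n z (a + b) = monomial_at n z a * monomial_at n z b"
  by (simp add: monomial_at_def nonzero_point_def lookup_add power_int_add prod.distrib[symmetric])

lemma leval_add: "leval n (f + g) z = leval n f z + leval n g z"
  by (simp add: leval_eq_lin_ext lin_ext_add)

lemma leval_diff: "leval n (f - g) z = leval n f z - leval n g z"
  by (simp add: leval_eq_lin_ext lin_ext_diff)

lemma leval_sum: "leval n (\<Sum>i\<in>I. F i) z = (\<Sum>i\<in>I. leval n (F i) z)"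
  by (simp add: leval_eq_lin_ext lin_ext_sum)

lemma leval_mult: "nonzero_point n z \<Longrightarrow> leval n (f * g) z = leval n f z * leval n g z"
  by (simp add: leval_eq_lin_ext lin_ext_mult monomial_at_add)

lemma leval_lconst: "leval n (lconst c) z = c"
  by (simp add: leval_eq_lin_ext lconst_def lin_ext_single monomial_at_def)

lemma leval_prod:
  "nonzero_point n z \<Longrightarrow> leval n (\<Prod>i\<in>I. F i) z = (\<Prod>i\<in>I. leval n (F i) z)"
  using leval_lconst[of n 1 z]
  by (induct I rule: infinite_finite_induct) (simp_all add: leval_mult lconst_def)

lemma leval_xpow:
  assumes "j \<in> {1..n}"
  shows "leval n (xpow j c) z = z j powi c"
proof -
  have "monomial_at n z (Poly_Mapping.single j c) = (\<Prod>i\<in>{1..n}. if i = j then z j powi c else 1)"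
    unfolding monomial_at_def by (rule prod.cong) (auto simp: lookup_single when_def)
  thus ?thesis using assms by (simp add: leval_eq_lin_ext xpow_def lin_ext_single)
qed

lemma Vset_add: "f \<in> Vset n \<Longrightarrow> g \<in> Vset n \<Longrightarrow> f + g \<in> Vset n"
  unfolding Vset_def using keys_add[of f g] by blast

lemma Vset_uminus: "f \<in> Vset n \<Longrightarrow> - f \<in> Vset n"
  unfolding Vset_def by simp

lemma Vset_mult:
  assumes "f \<in> Vset n" and "g \<in> Vset n"
  shows "f * g \<in> Vset n"
  unfolding Vset_def
proof (intro CollectI ballI)
  fix e assume "e \<in> Poly_Mapping.keys (f * g)"
  then obtain a b where ab: "e = a + b" "a \<in> Poly_Mapping.keys f" "b \<in> Poly_Mapping.keys g"
    using keys_mult by blast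
  hence "Poly_Mapping.keys a \<subseteq> {1..n}" "Poly_Mapping.keys b \<subseteq> {1..n}"
    using assms by (auto simp: Vset_def)
  thus "Poly_Mapping.keys e \<subseteq> {1..n}" using ab(1) keys_add[of a b] by blast
qed

lemma Vset_lconst: "lconst c \<in> Vset n"
  by (simp add: Vset_def lconst_def)

lemma Vset_xpow: "j \<in> {1..n} \<Longrightarrow> xpow j c \<in> Vset n"
  by (simp add: Vset_def xpow_def)

lemma Vset_sum: "(\<And>i. i \<in> I \<Longrightarrow> F i \<in> Vset n) \<Longrightarrow> (\<Sum>i\<in>I. F i) \<in> Vset n"
  using Vset_lconst[of 0 n]
  by (induct I rule: infinite_finite_induct) (simp_all add: Vset_add lconst_def)

lemma Vset_prod: "(\<And>i. i \<in> I \<Longrightarrow> F i \<in> Vset n) \<Longrightarrow> (\<Prod>i\<in>I. F i) \<in> Vset n"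
  using Vset_lconst[of 1 n]
  by (induct I rule: infinite_finite_induct) (simp_all add: Vset_mult lconst_def)

lemma Vset_power: "f \<in> Vset n \<Longrightarrow> f ^ j \<in> Vset n"
  by (induct j) (use Vset_lconst[of 1 n] in \<open>simp_all add: Vset_mult lconst_def\<close>)

lemma Vset_msubst:
  assumes "f \<in> Vset n" and "\<And>j. j \<in> {1..n} \<Longrightarrow> \<sigma> j \<in> {1..n}"
  shows "msubst \<sigma> coef f \<in> Vset n"
  unfolding msubst_def
proof (intro Vset_sum Vset_mult Vset_lconst Vset_prod Vset_xpow)
  fix e j assume "e \<in> Poly_Mapping.keys f" "j \<in> Poly_Mapping.keys e"
  hence "j \<in> {1..n}" using assms(1) unfolding Vset_def by blast
  thus "\<sigma> j \<in> {1..n}" by (rule assms(2))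
qed

lemma leval_msubst:
  assumes z: "nonzero_point n z" and f: "f \<in> Vset n"
    and \<sigma>: "\<And>j. j \<in> {1..n} \<Longrightarrow> \<sigma> j \<in> {1..n}"
  shows "leval n (msubst \<sigma> coef f) z =
    (\<Sum>e \<in> Poly_Mapping.keys f. Poly_Mapping.lookup f e * coef e * monomial_at n (z \<circ> \<sigma>) e)"
  unfolding msubst_def leval_sum
proof (rule sum.cong[OF refl])
  fix e assume "e \<in> Poly_Mapping.keys f"
  hence e: "Poly_Mapping.keys e \<subseteq> {1..n}" using f by (simp add: Vset_def)
  have "(\<Prod>j\<in>Poly_Mapping.keys e. leval n (xpow (\<sigma> j) (Poly_Mapping.lookup e j)) z)
      = (\<Prod>j\<in>Poly_Mapping.keys e. z (\<sigma> j) powi Poly_Mapping.lookup e j)"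
    using e \<sigma> by (intro prod.cong refl leval_xpow) auto
  also have "\<dots> = monomial_at n (z \<circ> \<sigma>) e"
    unfolding monomial_at_def comp_def using e by (intro prod.mono_neutral_left) (auto simp: in_keys_iff)
  finally show "leval n (lconst (Poly_Mapping.lookup f e * coef e)
      * (\<Prod>j\<in>Poly_Mapping.keys e. xpow (\<sigma> j) (Poly_Mapping.lookup e j))) z
     = Poly_Mapping.lookup f e * coef e * monomial_at n (z \<circ> \<sigma>) e"
    using z by (simp add: leval_mult leval_prod leval_lconst)
qed

lemma swp_mem: "i \<in> {1..n-1} \<Longrightarrow> j \<in> {1..n} \<Longrightarrow> swp i j \<in> {1..n}"
  by (auto simp: swp_def)

lemma leval_sop:
  assumes "nonzero_point n z" and "f \<in> Vset n" and "i \<in> {1..n-1}"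
  shows "leval n (sop i f) z = leval n f (z \<circ> swp i)"
  using leval_msubst[OF assms(1,2), of "swp i" "\<lambda>_. 1"] swp_mem[OF assms(3)]
  by (simp add: sop_def leval_eq_lin_ext lin_ext_def)

lemma Vset_sop: "f \<in> Vset n \<Longrightarrow> i \<in> {1..n-1} \<Longrightarrow> sop i f \<in> Vset n"
  unfolding sop_def by (rule Vset_msubst) (use swp_mem[of i n] in auto)

definition omega_pt :: "nat \<Rightarrow> nat \<Rightarrow> nat \<Rightarrow> (nat \<Rightarrow> kf) \<Rightarrow> nat \<Rightarrow> kf" where
  "omega_pt n k r z = (\<lambda>j. if j = 1 then qq k r * z n else z (j - 1))"

definition omega_inv_pt :: "nat \<Rightarrow> nat \<Rightarrow> nat \<Rightarrow> (nat \<Rightarrow> kf) \<Rightarrow> nat \<Rightarrow> kf" where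
  "omega_inv_pt n k r z = (\<lambda>j. if j = n then inverse (qq k r) * z 1 else z (j + 1))"

lemma monomial_at_twist:
  assumes "j0 \<in> {1..n}"
  shows "monomial_at n (\<lambda>j. (if j = j0 then c else 1) * z j) e
           = c powi Poly_Mapping.lookup e j0 * monomial_at n z e"
proof -
  have "monomial_at n (\<lambda>j. (if j = j0 then c else 1) * z j) e
     = (\<Prod>j\<in>{1..n}. (if j = j0 then c powi Poly_Mapping.lookup e j0 else 1)) * monomial_at n z e"
    unfolding monomial_at_def power_int_mult_distrib prod.distrib[symmetric]
    by (rule prod.cong) auto
  thus ?thesis using assms by simp
qed

lemma leval_omega:
  assumes n: "1 \<le> n" and z: "nonzero_point n z" and f: "f \<in> Vset n"
  shows "leval n (omega n k r f) z = leval n f (omega_pt n k r z)"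
proof -
  let ?\<sigma> = "\<lambda>j::nat. if j = 1 then n else j - 1"
  have "omega_pt n k r z = (\<lambda>j. (if j = 1 then qq k r else 1) * (z \<circ> ?\<sigma>) j)"
    by (auto simp: omega_pt_def)
  hence "monomial_at n (omega_pt n k r z) e
           = qq k r powi Poly_Mapping.lookup e 1 * monomial_at n (z \<circ> ?\<sigma>) e" for e
    by (simp only: monomial_at_twist[of 1 n] n atLeastAtMost_iff order_refl)
  moreover have "\<And>j. j \<in> {1..n} \<Longrightarrow> ?\<sigma> j \<in> {1..n}" using n by auto
  hence "leval n (omega n k r f) z = (\<Sum>e \<in> Poly_Mapping.keys f. Poly_Mapping.lookup f e
           * qq k r powi Poly_Mapping.lookup e 1 * monomial_at n (z \<circ> ?\<sigma>) e)"
    unfolding omega_def by (rule leval_msubst[OF z f])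
  ultimately show ?thesis by (simp add: leval_eq_lin_ext lin_ext_def mult_ac)
qed

lemma leval_omega_inv:
  assumes n: "1 \<le> n" and z: "nonzero_point n z" and f: "f \<in> Vset n"
  shows "leval n (omega_inv n k r f) z = leval n f (omega_inv_pt n k r z)"
proof -
  let ?\<sigma> = "\<lambda>j::nat. if j = n then 1 else j + 1"
  have "omega_inv_pt n k r z = (\<lambda>j. (if j = n then inverse (qq k r) else 1) * (z \<circ> ?\<sigma>) j)"
    by (auto simp: omega_inv_pt_def)
  hence "monomial_at n (omega_inv_pt n k r z) e
           = inverse (qq k r) powi Poly_Mapping.lookup e n * monomial_at n (z \<circ> ?\<sigma>) e" for e
    by (simp only: monomial_at_twist[of n n] n atLeastAtMost_iff order_refl)
  hence "monomial_at n (omega_inv_pt n k r z) e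
           = qq k r powi (- Poly_Mapping.lookup e n) * monomial_at n (z \<circ> ?\<sigma>) e" for e
    by (simp add: power_int_minus power_int_inverse)
  moreover have "\<And>j. j \<in> {1..n} \<Longrightarrow> ?\<sigma> j \<in> {1..n}" using n by auto
  hence "leval n (omega_inv n k r f) z = (\<Sum>e \<in> Poly_Mapping.keys f. Poly_Mapping.lookup f e
           * qq k r powi (- Poly_Mapping.lookup e n) * monomial_at n (z \<circ> ?\<sigma>) e)"
    unfolding omega_inv_def by (rule leval_msubst[OF z f])
  ultimately show ?thesis by (simp add: leval_eq_lin_ext lin_ext_def mult_ac)
qed

lemma Vset_omega: "1 \<le> n \<Longrightarrow> f \<in> Vset n \<Longrightarrow> omega n k r f \<in> Vset n"
  unfolding omega_def by (rule Vset_msubst) auto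

lemma Vset_omega_inv: "1 \<le> n \<Longrightarrow> f \<in> Vset n \<Longrightarrow> omega_inv n k r f \<in> Vset n"
  unfolding omega_inv_def by (rule Vset_msubst) auto

section \<open>The Demazure--Lusztig operators\<close>

definition Vdvd :: "nat \<Rightarrow> lpoly \<Rightarrow> lpoly \<Rightarrow> bool" where
  "Vdvd n d a \<longleftrightarrow> (\<exists>c \<in> Vset n. a = d * c)"

lemma Vdvd_0: "Vdvd n d 0"
  unfolding Vdvd_def using Vset_lconst[of 0 n] by (force simp: lconst_def)

lemma Vdvd_add: "Vdvd n d a \<Longrightarrow> Vdvd n d b \<Longrightarrow> Vdvd n d (a + b)"
  unfolding Vdvd_def by (metis Vset_add distrib_left)

lemma Vdvd_uminus: "Vdvd n d a \<Longrightarrow> Vdvd n d (- a)"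
  unfolding Vdvd_def by (metis Vset_uminus mult_minus_right)

lemma Vdvd_mult: "c \<in> Vset n \<Longrightarrow> Vdvd n d a \<Longrightarrow> Vdvd n d (c * a)"
  unfolding Vdvd_def by (metis Vset_mult mult.left_commute)

lemma Vdvd_sum: "(\<And>i. i \<in> I \<Longrightarrow> Vdvd n d (F i)) \<Longrightarrow> Vdvd n d (\<Sum>i\<in>I. F i)"
  by (induct I rule: infinite_finite_induct) (simp_all add: Vdvd_0 Vdvd_add)

lemma Vdvd_prod_diff:
  assumes "finite A"
    and "\<And>j. j \<in> A \<Longrightarrow> a j \<in> Vset n" "\<And>j. j \<in> A \<Longrightarrow> b j \<in> Vset n"
    and "\<And>j. j \<in> A \<Longrightarrow> Vdvd n d (a j - b j)"
  shows "Vdvd n d ((\<Prod>j\<in>A. a j) - (\<Prod>j\<in>A. b j))"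
  using assms
proof (induct A rule: finite_induct)
  case empty thus ?case by (simp add: Vdvd_0)
next
  case (insert x F)
  have eq: "(\<Prod>j\<in>insert x F. a j) - (\<Prod>j\<in>insert x F. b j)
     = a x * ((\<Prod>j\<in>F. a j) - (\<Prod>j\<in>F. b j)) + (\<Prod>j\<in>F. b j) * (a x - b x)"
    using insert(1,2) by (simp add: algebra_simps)
  show ?case unfolding eq by (intro Vdvd_add Vdvd_mult insert Vset_prod) auto
qed

lemma xpow_add: "xpow j a * xpow j b = xpow j (a + b)"
  by (simp add: xpow_def mult_single single_add)

lemma xpow_0: "xpow j 0 = 1"
  by (simp add: xpow_def)

lemma xpow_of_nat: "xpow j (int m) = xv j ^ m"
proof (induct m)
  case 0 thus ?case by (simp add: xpow_0)
next
  case (Suc m)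
  have "xpow j (int (Suc m)) = xv j * xpow j (int m)" by (simp add: xv_def xpow_add)
  thus ?case using Suc by simp
qed

lemma Vdvd_xpow_diff:
  assumes i: "i \<in> {1..n}" "i + 1 \<in> {1..n}"
  shows "Vdvd n (xv i - xv (i + 1)) (xpow i c - xpow (i + 1) c)"
proof -
  let ?X = "xv i" and ?Y = "xv (i + 1)"
  have power_diff: "Vdvd n (?X - ?Y) (?X ^ m - ?Y ^ m)" for m
  proof -
    have "?X ^ m - ?Y ^ m = (?X - ?Y) * (\<Sum>p<m. ?Y ^ (m - Suc p) * ?X ^ p)"
      by (rule power_diff_sumr2)
    moreover have "(\<Sum>p<m. ?Y ^ (m - Suc p) * ?X ^ p) \<in> Vset n"
      using i by (intro Vset_sum Vset_mult Vset_power) (auto simp: xv_def Vset_xpow)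
    ultimately show ?thesis unfolding Vdvd_def by blast
  qed
  show ?thesis
  proof (cases "c \<ge> 0")
    case True
    then obtain m where "c = int m" by (metis nonneg_int_cases)
    thus ?thesis using power_diff[of m] by (simp add: xpow_of_nat)
  next
    case False
    define m where "m = nat (- c)"
    hence c: "c = - int m" using False by simp
    let ?U = "xpow i (- int m)" and ?W = "xpow (i + 1) (- int m)"
    have U: "?U * ?X ^ m = 1" and W: "?W * ?Y ^ m = 1"
      by (simp_all only: xpow_of_nat[symmetric] xpow_add) (simp_all add: xpow_0)
    have "?U * ?W * (?Y ^ m - ?X ^ m) = ?U * (?W * ?Y ^ m) - ?W * (?U * ?X ^ m)"
      by (simp add: algebra_simps)
    hence eq: "?U - ?W = (- (?U * ?W)) * (?X ^ m - ?Y ^ m)"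
      unfolding U W by (simp add: algebra_simps)
    have "- (?U * ?W) \<in> Vset n" using i by (intro Vset_uminus Vset_mult Vset_xpow) auto
    hence "Vdvd n (?X - ?Y) (?U - ?W)" unfolding eq using power_diff by (rule Vdvd_mult)
    thus ?thesis unfolding c .
  qed
qed

lemma single_eq_lconst_mult_xpow:
  "Poly_Mapping.single e c = lconst c * (\<Prod>j\<in>Poly_Mapping.keys e. xpow j (Poly_Mapping.lookup e j))"
proof -
  have "(\<Prod>j\<in>J. xpow j (Poly_Mapping.lookup e j))
          = Poly_Mapping.single (\<Sum>j\<in>J. Poly_Mapping.single j (Poly_Mapping.lookup e j)) 1"
    if "finite J" for J
    using that by (induct J rule: finite_induct) (simp_all add: xpow_def mult_single)
  thus ?thesis by (simp add: poly_mapping_sum_single[of e, symmetric] lconst_def mult_single)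
qed

lemma Vdvd_sop_diff:
  assumes f: "f \<in> Vset n" and i: "i \<in> {1..n-1}"
  shows "Vdvd n (xv i - xv (i + 1)) (sop i f - f)"
proof -
  let ?P = "\<lambda>e. (\<Prod>j\<in>Poly_Mapping.keys e. xpow j (Poly_Mapping.lookup e j))"
  let ?Q = "\<lambda>e. (\<Prod>j\<in>Poly_Mapping.keys e. xpow (swp i j) (Poly_Mapping.lookup e j))"
  have "f = (\<Sum>e\<in>Poly_Mapping.keys f. lconst (Poly_Mapping.lookup f e) * ?P e)"
    by (subst poly_mapping_sum_single) (simp add: single_eq_lconst_mult_xpow)
  hence "sop i f - f = (\<Sum>e\<in>Poly_Mapping.keys f. lconst (Poly_Mapping.lookup f e) * (?Q e - ?P e))"
    by (subst (2) \<open>f = _\<close>) (simp add: sop_def msubst_def algebra_simps sum_subtractf)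
  also have "Vdvd n (xv i - xv (i + 1)) \<dots>"
  proof (intro Vdvd_sum Vdvd_mult[OF Vset_lconst] Vdvd_prod_diff finite_keys)
    fix e j assume "e \<in> Poly_Mapping.keys f" "j \<in> Poly_Mapping.keys e"
    hence j: "j \<in> {1..n}" using f unfolding Vset_def by blast
    show "xpow (swp i j) (Poly_Mapping.lookup e j) \<in> Vset n"
      using swp_mem[OF i j] by (rule Vset_xpow)
    show "xpow j (Poly_Mapping.lookup e j) \<in> Vset n" using j by (rule Vset_xpow)
    have ii: "i \<in> {1..n}" "i + 1 \<in> {1..n}" using i by auto
    consider "j = i" | "j = i + 1" | "swp i j = j"
      by (cases "j = i \<or> j = i + 1") (auto simp: swp_def)
    thus "Vdvd n (xv i - xv (i + 1))
            (xpow (swp i j) (Poly_Mapping.lookup e j) - xpow j (Poly_Mapping.lookup e j))"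
    proof cases
      case 1
      thus ?thesis using Vdvd_uminus[OF Vdvd_xpow_diff[OF ii, of "Poly_Mapping.lookup e j"]]
        by (simp add: swp_def)
    next
      case 2
      thus ?thesis using Vdvd_xpow_diff[OF ii, of "Poly_Mapping.lookup e j"] by (simp add: swp_def)
    qed (simp add: Vdvd_0)
  qed
  finally show ?thesis .
qed

lemma xv_diff_nonzero: "xv i - xv (i + 1) \<noteq> 0"
proof
  assume "xv i - xv (i + 1) = 0"
  hence "Poly_Mapping.lookup (xv i) (Poly_Mapping.single i 1)
           = Poly_Mapping.lookup (xv (i + 1)) (Poly_Mapping.single i 1)"
    by simp
  moreover have "Poly_Mapping.single i (1::int) \<noteq> Poly_Mapping.single (i + 1) 1"
    by (metis lookup_single_eq lookup_single_not_eq n_not_Suc_n Suc_eq_plus1 one_neq_zero)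
  ultimately show False by (simp add: xv_def xpow_def lookup_single when_def)
qed

text \<open>The \<open>THE\<close> in the definition of \<open>T\<^sub>i\<close> is the exact quotient, which exists in \<open>V\<close>.\<close>
lemma Top_eq_divided_difference:
  assumes f: "f \<in> Vset n" and i: "i \<in> {1..n-1}"
  obtains g where "g \<in> Vset n"
    and "Top k r i f = lconst (sqt k r) * sop i f + lconst (sqt k r - inverse (sqt k r)) * g"
    and "(xv i - xv (i + 1)) * g = xv (i + 1) * (sop i f - f)"
proof -
  obtain c where c: "c \<in> Vset n" "sop i f - f = (xv i - xv (i + 1)) * c"
    using Vdvd_sop_diff[OF f i] unfolding Vdvd_def by blast
  let ?g = "xv (i + 1) * c"
  have g: "(xv i - xv (i + 1)) * ?g = xv (i + 1) * (sop i f - f)"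
    by (simp add: c(2) algebra_simps)
  have "(THE g. (xv i - xv (i + 1)) * g = xv (i + 1) * (sop i f - f)) = ?g"
  proof (rule the_equality)
    fix g' assume "(xv i - xv (i + 1)) * g' = xv (i + 1) * (sop i f - f)"
    hence "(xv i - xv (i + 1)) * g' = (xv i - xv (i + 1)) * ?g" by (rule trans[OF _ g[symmetric]])
    thus "g' = ?g" using xv_diff_nonzero[of i] by simp
  qed (rule g)
  moreover have "?g \<in> Vset n" using i c(1) by (intro Vset_mult) (auto simp: xv_def Vset_xpow)
  ultimately show ?thesis using that g unfolding Top_def by auto
qed

section \<open>The point sets \<open>Z\<^sub>m\<close>\<close>

definition Zwit :: "nat \<Rightarrow> nat \<Rightarrow> nat \<Rightarrow> nat \<Rightarrow> (nat \<Rightarrow> kf)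
    \<Rightarrow> (nat \<Rightarrow> nat \<Rightarrow> nat) \<Rightarrow> (nat \<Rightarrow> nat \<Rightarrow> nat) \<Rightarrow> bool" where
  "Zwit n k r m z idx s \<longleftrightarrow>
     inj_on (\<lambda>(l, a). idx l a) ({1..m} \<times> {1..k+1}) \<and>
     (\<forall>l \<in> {1..m}. \<forall>a \<in> {1..k+1}. idx l a \<in> {1..n}) \<and>
     (\<forall>l \<in> {1..m}. \<forall>a \<in> {1..k}. z (idx l (a + 1)) = z (idx l a) * tt k r * qq k r ^ s l a) \<and>
     (\<forall>l \<in> {1..m}. (\<Sum>a = 1..k. s l a) \<le> r - 2) \<and>
     (\<forall>l \<in> {1..m}. \<forall>a \<in> {1..k}. s l a = 0 \<longrightarrow> idx l a < idx l (a + 1))"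

lemma Zset_iff: "z \<in> Zset n k r m \<longleftrightarrow> nonzero_point n z \<and> (\<exists>idx s. Zwit n k r m z idx s)"
  unfolding Zset_def Zwit_def nonzero_point_def by blast

context
  fixes n k r m z idx s
  assumes wit: "Zwit n k r m z idx s"
begin

lemma Zwit_inj:
  assumes "l \<in> {1..m}" "l' \<in> {1..m}" "a \<in> {1..k+1}" "a' \<in> {1..k+1}" "idx l a = idx l' a'"
  shows "l = l' \<and> a = a'"
proof -
  have "inj_on (\<lambda>(l, a). idx l a) ({1..m} \<times> {1..k+1})" using wit by (simp add: Zwit_def)
  from inj_onD[OF this, of "(l, a)" "(l', a')"] show ?thesis using assms by auto
qed

lemma Zwit_mem: "l \<in> {1..m} \<Longrightarrow> a \<in> {1..k+1} \<Longrightarrow> idx l a \<in> {1..n}"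
  using wit unfolding Zwit_def by blast

lemma Zwit_step:
  "l \<in> {1..m} \<Longrightarrow> a \<in> {1..k} \<Longrightarrow> z (idx l (a + 1)) = z (idx l a) * tt k r * qq k r ^ s l a"
  using wit unfolding Zwit_def by blast

lemma Zwit_sum_le: "l \<in> {1..m} \<Longrightarrow> (\<Sum>a = 1..k. s l a) \<le> r - 2"
  using wit unfolding Zwit_def by blast

lemma Zwit_less: "l \<in> {1..m} \<Longrightarrow> a \<in> {1..k} \<Longrightarrow> s l a = 0 \<Longrightarrow> idx l a < idx l (a + 1)"
  using wit unfolding Zwit_def by blast

lemma Zwit_chain:
  assumes l: "l \<in> {1..m}" and "1 \<le> a" "a \<le> b" "b \<le> k + 1"
  shows "z (idx l b) = z (idx l a) * tt k r ^ (b - a) * qq k r ^ (\<Sum>c\<in>{a..<b}. s l c)"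
  using assms(3,4)
proof (induct b rule: dec_induct)
  case (step b)
  hence "b \<in> {1..k}" using assms(2) by auto
  hence "z (idx l (Suc b)) = z (idx l b) * tt k r * qq k r ^ s l b"
    using Zwit_step[OF l] by simp
  also have "\<dots> = z (idx l a) * tt k r ^ (b - a) * qq k r ^ (\<Sum>c\<in>{a..<b}. s l c)
                     * tt k r * qq k r ^ s l b"
    using step by simp
  also have "\<dots> = z (idx l a) * tt k r ^ (Suc b - a) * qq k r ^ (\<Sum>c\<in>{a..<Suc b}. s l c)"
    using step(1) by (simp add: Suc_diff_le power_add mult_ac)
  finally show ?case .
qed simp

lemma Zwit_partial_sum_le:
  assumes "l \<in> {1..m}" "1 \<le> a" "b \<le> k + 1"
  shows "(\<Sum>c\<in>{a..<b}. s l c) \<le> r - 2"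
proof -
  have "(\<Sum>c\<in>{a..<b}. s l c) \<le> (\<Sum>c\<in>{1..k}. s l c)"
    using assms by (intro sum_mono2) auto
  thus ?thesis using Zwit_sum_le[OF assms(1)] by linarith
qed

lemma Zwit_chain_distinct:
  assumes r: "2 \<le> r" and "nonzero_point n z" and l: "l \<in> {1..m}"
    and ab: "a \<in> {1..k+1}" "b \<in> {1..k+1}" "a \<noteq> b"
  shows "z (idx l a) \<noteq> z (idx l b)"
proof
  assume eq: "z (idx l a) = z (idx l b)"
  have gen: False if "a' \<in> {1..k+1}" "b' \<in> {1..k+1}" "a' < b'"
    "z (idx l a') = z (idx l b')" for a' b'
  proof -
    let ?P = "tt k r ^ (b' - a') * qq k r ^ (\<Sum>c\<in>{a'..<b'}. s l c)"
    have nz: "z (idx l a') \<noteq> 0"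
      using \<open>nonzero_point n z\<close> Zwit_mem[OF l that(1)] by (simp add: nonzero_point_def)
    have "z (idx l b') = z (idx l a') * tt k r ^ (b' - a') * qq k r ^ (\<Sum>c\<in>{a'..<b'}. s l c)"
      using that by (intro Zwit_chain[OF l]) auto
    hence "z (idx l a') * ?P = z (idx l a') * 1" using that(4) by (metis mult.assoc mult_1_right)
    hence "?P = 1" using mult_left_cancel[OF nz] by blast
    moreover have "(\<Sum>c\<in>{a'..<b'}. s l c) \<le> r - 2"
      using that by (intro Zwit_partial_sum_le[OF l]) auto
    ultimately show False using tt_power_mult_qq_power_neq_1[OF r, of "b' - a'"] that(3) by simp
  qed
  consider "a < b" | "b < a" using ab(3) by linarith
  thus False using gen[OF ab(1,2) _ eq] gen[OF ab(2,1) _ eq[symmetric]] by cases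
qed

end

lemma Zset_cong:
  assumes "z \<in> Zset n k r m" and "\<And>i. i \<in> {1..n} \<Longrightarrow> z' i = z i"
  shows "z' \<in> Zset n k r m"
proof -
  obtain idx s where wit: "Zwit n k r m z idx s" and "nonzero_point n z"
    using assms(1) Zset_iff by blast
  hence "nonzero_point n z'" using assms(2) by (simp add: nonzero_point_def)
  moreover have "z' (idx l (a + 1)) = z' (idx l a) * tt k r * qq k r ^ s l a"
    if "l \<in> {1..m}" "a \<in> {1..k}" for l a
  proof -
    have "idx l (a + 1) \<in> {1..n}" "idx l a \<in> {1..n}" using Zwit_mem[OF wit \<open>l \<in> _\<close>] that by auto
    thus ?thesis using assms(2) Zwit_step[OF wit that] by simp
  qed
  hence "Zwit n k r m z' idx s" using wit unfolding Zwit_def by blast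
  ultimately show ?thesis using Zset_iff by blast
qed

definition chain_closed :: "nat \<Rightarrow> nat \<Rightarrow> (nat \<Rightarrow> nat \<Rightarrow> nat) \<Rightarrow> nat set \<Rightarrow> bool" where
  "chain_closed k m idx C \<longleftrightarrow>
     (\<forall>l \<in> {1..m}. \<forall>a \<in> {1..k}. idx l (a + 1) \<in> C \<longleftrightarrow> idx l a \<in> C)"

lemma chain_closed_UNIV: "chain_closed k m idx UNIV"
  by (simp add: chain_closed_def)

definition scale_on :: "nat set \<Rightarrow> kf \<Rightarrow> (nat \<Rightarrow> kf) \<Rightarrow> nat \<Rightarrow> kf" where
  "scale_on C x z = (\<lambda>j. if j \<in> C then x * z j else z j)"

lemma Zset_scale_on:
  assumes z: "z \<in> Zset n k r m" and x: "x \<noteq> 0" and wit: "Zwit n k r m z idx s"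
    and C: "chain_closed k m idx C"
  shows "scale_on C x z \<in> Zset n k r m" and "Zwit n k r m (scale_on C x z) idx s"
proof -
  have "\<forall>l \<in> {1..m}. \<forall>a \<in> {1..k}.
          scale_on C x z (idx l (a + 1)) = scale_on C x z (idx l a) * tt k r * qq k r ^ s l a"
    using Zwit_step[OF wit] C by (auto simp: chain_closed_def scale_on_def mult.assoc)
  thus wit': "Zwit n k r m (scale_on C x z) idx s" using wit unfolding Zwit_def by blast
  have "nonzero_point n (scale_on C x z)"
    using z x by (simp add: Zset_iff nonzero_point_def scale_on_def)
  thus "scale_on C x z \<in> Zset n k r m" using wit' Zset_iff by blast
qed

lemma swp_swp: "swp i (swp i j) = j"
  by (simp add: swp_def)

lemma inj_swp: "inj (swp i)"
  by (metis injI swp_swp)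

lemma swp_less: "x < y \<Longrightarrow> \<not> (x = i \<and> y = i + 1) \<Longrightarrow> swp i x < swp i y"
  by (auto simp: swp_def)

text \<open>\<open>x\<^sub>i\<close> and \<open>x\<^sub>i\<^sub>+\<^sub>1\<close> are consecutive in a chain with exponent 0, i.e. \<open>z\<^sub>i\<^sub>+\<^sub>1 = t z\<^sub>i\<close>
  and the order condition forbids swapping them.\<close>
definition tight_pair :: "nat \<Rightarrow> nat \<Rightarrow> (nat \<Rightarrow> nat \<Rightarrow> nat) \<Rightarrow> (nat \<Rightarrow> nat \<Rightarrow> nat) \<Rightarrow> nat \<Rightarrow> bool"
  where "tight_pair k m idx s i \<longleftrightarrow>
    (\<exists>l \<in> {1..m}. \<exists>a \<in> {1..k}. idx l a = i \<and> idx l (a + 1) = i + 1 \<and> s l a = 0)"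

lemma Zset_swp:
  assumes z: "z \<in> Zset n k r m" and wit: "Zwit n k r m z idx s" and i: "i \<in> {1..n-1}"
    and not_tight: "\<not> tight_pair k m idx s i"
  shows "z \<circ> swp i \<in> Zset n k r m"
proof -
  have "Zwit n k r m (z \<circ> swp i) (\<lambda>l a. swp i (idx l a)) s"
    unfolding Zwit_def
  proof (intro conjI)
    have "inj_on (swp i \<circ> (\<lambda>(l, a). idx l a)) ({1..m} \<times> {1..k+1})"
      using wit unfolding Zwit_def by (intro comp_inj_on) (auto intro: inj_on_subset[OF inj_swp])
    thus "inj_on (\<lambda>(l, a). swp i (idx l a)) ({1..m} \<times> {1..k + 1})"
      by (simp add: comp_def case_prod_unfold)
    show "\<forall>l\<in>{1..m}. \<forall>a\<in>{1..k + 1}. swp i (idx l a) \<in> {1..n}"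
      using Zwit_mem[OF wit] swp_mem[OF i] by blast
    show "\<forall>l\<in>{1..m}. \<forall>a\<in>{1..k}. (z \<circ> swp i) (swp i (idx l (a + 1)))
            = (z \<circ> swp i) (swp i (idx l a)) * tt k r * qq k r ^ s l a"
      using Zwit_step[OF wit] by (simp add: swp_swp)
    show "\<forall>l\<in>{1..m}. sum (s l) {1..k} \<le> r - 2" using Zwit_sum_le[OF wit] by blast
    show "\<forall>l\<in>{1..m}. \<forall>a\<in>{1..k}. s l a = 0 \<longrightarrow> swp i (idx l a) < swp i (idx l (a + 1))"
      using Zwit_less[OF wit] not_tight unfolding tight_pair_def by (metis swp_less)
  qed
  moreover have "nonzero_point n (z \<circ> swp i)"
    using z swp_mem[OF i] by (auto simp: Zset_iff nonzero_point_def)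
  ultimately show ?thesis using Zset_iff by blast
qed

text \<open>The action of \<open>\<omega>\<close> on a witness: indices move \<open>j \<mapsto> j + 1\<close> cyclically. A chain ending
  at \<open>x\<^sub>n\<close> wraps around: its last point becomes its first, and the wheel condition supplies
  the new first exponent \<open>r - 2 - \<Sum> s\<close>. A chain passing through \<open>x\<^sub>n\<close> picks up a
  factor \<open>q\<close> there: the step into \<open>x\<^sub>n\<close> gains one unit of exponent, the step out of it
  loses one.\<close>
locale Zwit_rotation =
  fixes n k r m :: nat and z :: "nat \<Rightarrow> kf" and idx s :: "nat \<Rightarrow> nat \<Rightarrow> nat"
  assumes k_pos: "1 \<le> k" and k_le: "k \<le> n - 1" and r_ge: "2 \<le> r"
    and wit: "Zwit n k r m z idx s"
begin

definition succ_mod :: "nat \<Rightarrow> nat" where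
  "succ_mod j = (if j = n then 1 else j + 1)"

definition wraps :: "nat \<Rightarrow> bool" where
  "wraps l \<longleftrightarrow> idx l (k + 1) = n"

definition rot :: "nat \<Rightarrow> nat \<Rightarrow> nat" where
  "rot l a = (if wraps l then (if a = 1 then k + 1 else a - 1) else a)"

definition rot_idx :: "nat \<Rightarrow> nat \<Rightarrow> nat" where
  "rot_idx l a = succ_mod (idx l (rot l a))"

definition rot_s :: "nat \<Rightarrow> nat \<Rightarrow> nat" where
  "rot_s l a = (if wraps l then (if a = 1 then r - 2 - (\<Sum>b = 1..k. s l b) else s l (a - 1))
     else nat (int (s l a) - of_bool (idx l a = n) + of_bool (idx l (a + 1) = n)))"

lemma omega_pt_succ_mod:
  "j \<in> {1..n} \<Longrightarrow> omega_pt n k r z (succ_mod j) = (if j = n then qq k r * z j else z j)"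
  by (auto simp: omega_pt_def succ_mod_def)

lemma succ_mod_mem: "j \<in> {1..n} \<Longrightarrow> succ_mod j \<in> {1..n}"
  using k_pos k_le by (auto simp: succ_mod_def)

lemma rot_mem: "a \<in> {1..k+1} \<Longrightarrow> rot l a \<in> {1..k+1}"
  by (auto simp: rot_def)

lemma wraps_idx_neq: "l \<in> {1..m} \<Longrightarrow> wraps l \<Longrightarrow> a \<in> {1..k} \<Longrightarrow> idx l a \<noteq> n"
  using Zwit_inj[OF wit, of l l a "k + 1"] by (auto simp: wraps_def)

lemma idx_succ_neq:
  "l \<in> {1..m} \<Longrightarrow> a \<in> {1..k} \<Longrightarrow> idx l a = n \<Longrightarrow> idx l (a + 1) \<noteq> n"
  using Zwit_inj[OF wit, of l l a "a + 1"] by auto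

lemma s_pos_at_n:
  assumes "l \<in> {1..m}" "a \<in> {1..k}" "idx l a = n"
  shows "1 \<le> s l a"
proof (rule ccontr)
  assume "\<not> 1 \<le> s l a"
  hence "idx l a < idx l (a + 1)" using Zwit_less[OF wit assms(1,2)] by simp
  moreover have "idx l (a + 1) \<in> {1..n}" using Zwit_mem[OF wit assms(1)] assms(2) by auto
  ultimately show False using assms(3) by simp
qed

lemma inj_on_succ_mod: "inj_on succ_mod {1..n}"
proof (rule inj_onI)
  fix j j' assume "j \<in> {1..n}" "j' \<in> {1..n}" "succ_mod j = succ_mod j'"
  thus "j = j'" unfolding succ_mod_def by (cases "j = n"; cases "j' = n") auto
qed

lemma inj_on_rot_idx: "inj_on (\<lambda>(l, a). rot_idx l a) ({1..m} \<times> {1..k+1})"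
proof (rule inj_onI, clarify)
  fix l a l' a'
  assume la: "l \<in> {1..m}" "a \<in> {1..k+1}" "l' \<in> {1..m}" "a' \<in> {1..k+1}"
    and eq: "rot_idx l a = rot_idx l' a'"
  from eq have "idx l (rot l a) = idx l' (rot l' a')"
    unfolding rot_idx_def
    by (rule inj_onD[OF inj_on_succ_mod _ Zwit_mem[OF wit la(1) rot_mem[OF la(2)]]
          Zwit_mem[OF wit la(3) rot_mem[OF la(4)]]])
  hence "l = l'" "rot l a = rot l a'"
    using Zwit_inj[OF wit la(1,3) rot_mem[OF la(2)] rot_mem[OF la(4)]] by auto
  thus "l = l' \<and> a = a'" using la by (auto simp: rot_def split: if_splits)
qed

lemma rot_idx_mem: "l \<in> {1..m} \<Longrightarrow> a \<in> {1..k+1} \<Longrightarrow> rot_idx l a \<in> {1..n}"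
  unfolding rot_idx_def by (intro succ_mod_mem Zwit_mem[OF wit] rot_mem)

lemma rot_step_wraps_first:
  assumes l: "l \<in> {1..m}" and "wraps l"
  shows "omega_pt n k r z (rot_idx l 2) = omega_pt n k r z (rot_idx l 1) * tt k r * qq k r ^ rot_s l 1"
proof -
  let ?S = "\<Sum>b = 1..k. s l b"
  have n: "idx l (k + 1) = n" "n \<in> {1..n}" using \<open>wraps l\<close> k_pos k_le by (auto simp: wraps_def)
  have first: "idx l 1 \<noteq> n" "idx l 1 \<in> {1..n}"
    using wraps_idx_neq[OF l \<open>wraps l\<close>, of 1] Zwit_mem[OF wit l, of 1] k_pos by auto
  have "z n = z (idx l 1) * tt k r ^ k * qq k r ^ ?S"
    using Zwit_chain[OF wit l, of 1 "k + 1"] n(1) by (simp add: atLeastLessThanSuc_atLeastAtMost)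
  moreover have "r - 1 = Suc (?S + (r - 2 - ?S))" using Zwit_sum_le[OF wit l] r_ge by arith
  hence "qq k r ^ (r - 1) = qq k r * qq k r ^ ?S * qq k r ^ (r - 2 - ?S)"
    by (simp only: power_add power_Suc mult.assoc)
  ultimately have "qq k r * z n * tt k r * qq k r ^ (r - 2 - ?S)
                     = z (idx l 1) * (tt k r ^ (k + 1) * qq k r ^ (r - 1))"
    by (simp add: mult_ac)
  hence wheel: "qq k r * z n * tt k r * qq k r ^ (r - 2 - ?S) = z (idx l 1)"
    by (simp only: tt_power_mult_qq_power_wheel[OF r_ge] mult_1_right)
  have "omega_pt n k r z (rot_idx l 2) = z (idx l 1)"
    using \<open>wraps l\<close> first omega_pt_succ_mod[OF first(2)] by (simp add: rot_idx_def rot_def)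
  moreover have "omega_pt n k r z (rot_idx l 1) * tt k r * qq k r ^ rot_s l 1
                   = qq k r * z n * tt k r * qq k r ^ (r - 2 - ?S)"
    using \<open>wraps l\<close> n omega_pt_succ_mod[OF n(2)] by (simp add: rot_idx_def rot_def rot_s_def)
  ultimately show ?thesis using wheel by (simp only:)
qed

lemma rot_step_wraps:
  assumes l: "l \<in> {1..m}" and "wraps l" and a: "a \<in> {1..k}"
  shows "omega_pt n k r z (rot_idx l (a + 1)) = omega_pt n k r z (rot_idx l a) * tt k r * qq k r ^ rot_s l a"
proof (cases "a = 1")
  case True
  show ?thesis unfolding True one_add_one by (rule rot_step_wraps_first[OF l \<open>wraps l\<close>])
next
  case False
  hence a': "a - 1 \<in> {1..k}" "a - 1 + 1 = a" using a by auto
  have "idx l a \<noteq> n" "idx l (a - 1) \<noteq> n" using wraps_idx_neq[OF l \<open>wraps l\<close>] a a' by auto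
  moreover have "idx l a \<in> {1..n}" "idx l (a - 1) \<in> {1..n}" using Zwit_mem[OF wit l] a a' by auto
  ultimately show ?thesis
    using Zwit_step[OF wit l a'(1)] \<open>wraps l\<close> False omega_pt_succ_mod a'(2)
    by (simp add: rot_idx_def rot_def rot_s_def)
qed

lemma rot_step_not_wraps:
  assumes l: "l \<in> {1..m}" and "\<not> wraps l" and a: "a \<in> {1..k}"
  shows "omega_pt n k r z (rot_idx l (a + 1)) = omega_pt n k r z (rot_idx l a) * tt k r * qq k r ^ rot_s l a"
proof -
  have mem: "idx l a \<in> {1..n}" "idx l (a + 1) \<in> {1..n}" using Zwit_mem[OF wit l] a by auto
  have step: "z (idx l (a + 1)) = z (idx l a) * tt k r * qq k r ^ s l a"
    by (rule Zwit_step[OF wit l a])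
  note simps = \<open>\<not> wraps l\<close> step omega_pt_succ_mod[OF mem(1)] omega_pt_succ_mod[OF mem(2)]
  consider "idx l a = n" | "idx l (a + 1) = n" | "idx l a \<noteq> n" "idx l (a + 1) \<noteq> n" by blast
  thus ?thesis
  proof cases
    case 1
    have ne: "idx l (a + 1) \<noteq> n" and pos: "1 \<le> s l a"
      using idx_succ_neq[OF l a 1] s_pos_at_n[OF l a 1] by auto
    have "rot_s l a = s l a - 1" using \<open>\<not> wraps l\<close> 1 ne by (simp add: rot_s_def)
    moreover have "qq k r ^ s l a = qq k r * qq k r ^ (s l a - 1)"
      using pos by (metis Suc_diff_le diff_Suc_1 power_Suc)
    ultimately show ?thesis using 1 ne simps by (simp add: rot_idx_def rot_def mult_ac)
  next
    case 2
    hence ne: "idx l a \<noteq> n" using Zwit_inj[OF wit l l, of a "a + 1"] a by auto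
    hence "rot_s l a = s l a + 1" using \<open>\<not> wraps l\<close> 2 by (simp add: rot_s_def)
    thus ?thesis using 2 ne simps by (simp add: rot_idx_def rot_def mult_ac)
  next
    case 3
    hence "rot_s l a = s l a" using \<open>\<not> wraps l\<close> by (simp add: rot_s_def)
    thus ?thesis using 3 simps by (simp add: rot_idx_def rot_def)
  qed
qed

lemma rot_s_sum_le_wraps:
  assumes l: "l \<in> {1..m}" and "wraps l"
  shows "(\<Sum>a = 1..k. rot_s l a) \<le> r - 2"
proof -
  let ?S = "\<Sum>b = 1..k. s l b"
  obtain k' where k': "k = Suc k'" using k_pos by (cases k) auto
  have "(\<Sum>a = 1..k. rot_s l a) = rot_s l 1 + (\<Sum>a = Suc 1..Suc k'. rot_s l a)"
    using k' by (simp add: sum.atLeast_Suc_atMost)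
  also have "(\<Sum>a = Suc 1..Suc k'. rot_s l a) = (\<Sum>a = 1..k'. s l a)"
    unfolding sum.shift_bounds_cl_Suc_ivl using \<open>wraps l\<close> by (simp add: rot_s_def)
  also have "(\<Sum>a = 1..k'. s l a) \<le> ?S"
    using k' by (intro sum_mono2) auto
  finally show ?thesis
    using \<open>wraps l\<close> Zwit_sum_le[OF wit l] by (simp add: rot_s_def)
qed

lemma rot_s_sum_le_not_wraps:
  assumes l: "l \<in> {1..m}" and "\<not> wraps l"
  shows "(\<Sum>a = 1..k. rot_s l a) \<le> r - 2"
proof -
  let ?A = "{1..k}" and ?P = "\<lambda>a. idx l a = n" and ?Q = "\<lambda>a. idx l (a + 1) = n"
  have "int (rot_s l a) = int (s l a) - of_bool (?P a) + of_bool (?Q a)" if "a \<in> ?A" for a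
    using \<open>\<not> wraps l\<close> s_pos_at_n[OF l that] by (simp add: rot_s_def)
  hence "int (\<Sum>a\<in>?A. rot_s l a)
           = int (\<Sum>a\<in>?A. s l a) - int (card (?A \<inter> {a. ?P a})) + int (card (?A \<inter> {a. ?Q a}))"
    by (simp add: sum.distrib sum_subtractf)
  moreover have "card (?A \<inter> {a. ?Q a}) \<le> card (?A \<inter> {a. ?P a})"
  proof (rule card_inj_on_le[of Suc])
    show "Suc ` (?A \<inter> {a. ?Q a}) \<subseteq> ?A \<inter> {a. ?P a}"
      using \<open>\<not> wraps l\<close> by (auto simp: wraps_def) (metis Suc_leI le_neq_implies_less)
  qed simp_all
  ultimately have "(\<Sum>a\<in>?A. rot_s l a) \<le> (\<Sum>a\<in>?A. s l a)" by linarith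
  thus ?thesis using Zwit_sum_le[OF wit l] by simp
qed

lemma rot_idx_less:
  assumes l: "l \<in> {1..m}" and a: "a \<in> {1..k}" and s0: "rot_s l a = 0"
  shows "rot_idx l a < rot_idx l (a + 1)"
proof -
  have mem: "idx l a \<in> {1..n}" "idx l (a + 1) \<in> {1..n}" using Zwit_mem[OF wit l] a by auto
  show ?thesis
  proof (cases "wraps l")
    case True
    show ?thesis
    proof (cases "a = 1")
      case True
      have "idx l 1 \<noteq> n" using wraps_idx_neq[OF l \<open>wraps l\<close>, of 1] k_pos by auto
      thus ?thesis using True \<open>wraps l\<close> k_pos Zwit_mem[OF wit l, of 1]
        by (auto simp: rot_idx_def rot_def wraps_def succ_mod_def)
    next
      case False
      hence a': "a - 1 \<in> {1..k}" "a - 1 + 1 = a" using a by auto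
      have "idx l a \<noteq> n" "idx l (a - 1) \<noteq> n" using wraps_idx_neq[OF l \<open>wraps l\<close>] a a' by auto
      moreover have "idx l (a - 1) < idx l a"
        using Zwit_less[OF wit l a'(1)] s0 \<open>wraps l\<close> False a'(2) by (simp add: rot_s_def)
      ultimately show ?thesis using \<open>wraps l\<close> False a by (simp add: rot_idx_def rot_def succ_mod_def)
    qed
  next
    case False
    consider "idx l a = n" | "idx l (a + 1) = n" | "idx l a \<noteq> n" "idx l (a + 1) \<noteq> n" by blast
    thus ?thesis
    proof cases
      case 1
      thus ?thesis using idx_succ_neq[OF l a 1] False mem
        by (simp add: rot_idx_def rot_def succ_mod_def)
    next
      case 2
      hence "idx l a \<noteq> n" using Zwit_inj[OF wit l l, of a "a + 1"] a by auto
      hence "rot_s l a = s l a + 1" using False 2 by (simp add: rot_s_def)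
      thus ?thesis using s0 by simp
    next
      case 3
      hence "idx l a < idx l (a + 1)" using Zwit_less[OF wit l a] s0 False by (simp add: rot_s_def)
      thus ?thesis using 3 False by (simp add: rot_idx_def rot_def succ_mod_def)
    qed
  qed
qed

lemma Zwit_rotated: "Zwit n k r m (omega_pt n k r z) rot_idx rot_s"
  unfolding Zwit_def
  using inj_on_rot_idx rot_idx_mem rot_step_wraps rot_step_not_wraps
    rot_s_sum_le_wraps rot_s_sum_le_not_wraps rot_idx_less
  by blast

end

lemma nonzero_point_omega_pt:
  assumes "1 \<le> n" and "nonzero_point n z"
  shows "nonzero_point n (omega_pt n k r z)"
  unfolding nonzero_point_def
proof
  fix i assume i: "i \<in> {1..n}"
  have nz: "\<And>j. j \<in> {1..n} \<Longrightarrow> z j \<noteq> 0" using assms(2) by (simp add: nonzero_point_def)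
  show "omega_pt n k r z i \<noteq> 0"
  proof (cases "i = 1")
    case True
    thus ?thesis using nz[of n] assms(1) qq_nonzero[of k r] by (simp add: omega_pt_def)
  next
    case False
    hence "i - 1 \<in> {1..n}" using i by auto
    thus ?thesis using nz[of "i - 1"] False by (simp add: omega_pt_def)
  qed
qed

lemma Zset_omega_pt:
  assumes "1 \<le> k" "k \<le> n - 1" "2 \<le> r" and z: "z \<in> Zset n k r m"
  shows "omega_pt n k r z \<in> Zset n k r m"
proof -
  obtain idx s where nz: "nonzero_point n z" and wit: "Zwit n k r m z idx s"
    using z Zset_iff by blast
  interpret Zwit_rotation n k r m z idx s
    using assms(1-3) wit by unfold_locales
  show ?thesis
    using Zwit_rotated nonzero_point_omega_pt[OF _ nz] assms(1,2) Zset_iff by auto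
qed

lemma omega_pt_funpow:
  assumes "j \<le> n" "i \<in> {1..n}"
  shows "(omega_pt n k r ^^ j) z i = (if i \<le> j then qq k r * z (n - j + i) else z (i - j))"
  using assms
proof (induct j arbitrary: i)
  case (Suc j)
  show ?case
  proof (cases "i = 1")
    case True
    thus ?thesis using Suc by (simp add: omega_pt_def Suc_diff_Suc)
  next
    case False
    have "(omega_pt n k r ^^ Suc j) z i = (omega_pt n k r ^^ j) z (i - 1)"
      using False by (simp add: omega_pt_def)
    also have "\<dots> = (if i - 1 \<le> j then qq k r * z (n - j + (i - 1)) else z (i - 1 - j))"
      using Suc False by (intro Suc.hyps) auto
    finally show ?thesis using False Suc by auto
  qed
qed simp

text \<open>\<open>\<omega>\<^sup>-\<^sup>1\<close> acts on points as \<open>\<omega>\<^sup>n\<^sup>-\<^sup>1\<close> after scaling by \<open>q\<^sup>-\<^sup>1\<close>.\<close>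
lemma Zset_omega_inv_pt:
  assumes k: "1 \<le> k" "k \<le> n - 1" and r: "2 \<le> r" and z: "z \<in> Zset n k r m"
  shows "omega_inv_pt n k r z \<in> Zset n k r m"
proof -
  obtain idx s where "Zwit n k r m z idx s" using z Zset_iff by blast
  hence "scale_on UNIV (inverse (qq k r)) z \<in> Zset n k r m"
    using Zset_scale_on[OF z _ _ chain_closed_UNIV] qq_nonzero by simp
  hence "(omega_pt n k r ^^ j) (scale_on UNIV (inverse (qq k r)) z) \<in> Zset n k r m" for j
    by (induct j) (simp_all add: Zset_omega_pt[OF k r])
  thus ?thesis
  proof (rule Zset_cong)
    fix i assume "i \<in> {1..n}"
    thus "omega_inv_pt n k r z i = (omega_pt n k r ^^ (n - 1)) (scale_on UNIV (inverse (qq k r)) z) i"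
      using k qq_nonzero[of k r]
      by (auto simp: omega_inv_pt_def omega_pt_funpow scale_on_def)
  qed
qed

section \<open>Vanishing on \<open>Z\<^sub>m\<close>\<close>

text \<open>A Laurent polynomial in one variable vanishing away from \<open>0\<close> and \<open>1\<close> also vanishes at
  \<open>1\<close>: multiplied by a power of the variable it becomes a polynomial with infinitely many
  roots.\<close>
lemma laurent_sum_eq_0_at_1:
  fixes c :: "'e \<Rightarrow> 'a::field" and d :: "'e \<Rightarrow> int"
  assumes inf: "infinite (UNIV :: 'a set)" and E: "finite E"
    and vanish: "\<And>x. x \<noteq> 0 \<Longrightarrow> x \<noteq> 1 \<Longrightarrow> (\<Sum>e\<in>E. c e * x powi d e) = 0"
  shows "(\<Sum>e\<in>E. c e) = 0"
proof -
  define N where "N = (\<Sum>e\<in>E. nat (- d e))"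
  have N: "d e + int N \<ge> 0" if "e \<in> E" for e
  proof -
    have "nat (- d e) \<le> N" unfolding N_def using E that by (intro member_le_sum) auto
    thus ?thesis by linarith
  qed
  define p where "p = (\<Sum>e\<in>E. monom (c e) (nat (d e + int N)))"
  have p: "poly p x = x powi int N * (\<Sum>e\<in>E. c e * x powi d e)" if "x \<noteq> 0" for x
  proof -
    have "poly p x = (\<Sum>e\<in>E. c e * x powi (d e + int N))"
      unfolding p_def poly_sum poly_monom
    proof (rule sum.cong[OF refl])
      fix e assume "e \<in> E"
      hence "int (nat (d e + int N)) = d e + int N" using N by simp
      thus "c e * x ^ nat (d e + int N) = c e * x powi (d e + int N)" by (metis power_int_of_nat)
    qed
    also have "\<dots> = x powi int N * (\<Sum>e\<in>E. c e * x powi d e)"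
      using that by (simp add: power_int_add sum_distrib_left mult_ac)
    finally show ?thesis .
  qed
  have "p = 0"
  proof (rule ccontr)
    assume "p \<noteq> 0"
    hence "finite {x. poly p x = 0}" by (rule poly_roots_finite)
    moreover have "UNIV - {0, 1} \<subseteq> {x. poly p x = 0}" using p vanish by auto
    ultimately have "finite (UNIV - {0, 1} :: 'a set)" by (rule finite_subset[rotated])
    hence "finite (UNIV :: 'a set)" by simp
    thus False using inf by blast
  qed
  thus ?thesis using p[of 1] by simp
qed

lemma power_int_sum:
  fixes x :: "'a::field"
  shows "x \<noteq> 0 \<Longrightarrow> x powi (\<Sum>j\<in>A. h j) = (\<Prod>j\<in>A. x powi h j)"
  by (induct A rule: infinite_finite_induct) (simp_all add: power_int_add)

lemma monomial_at_scale_on: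
  assumes "x \<noteq> 0"
  shows "monomial_at n (scale_on C x z) e = monomial_at n z e
           * x powi (\<Sum>j\<in>{1..n}. if j \<in> C then Poly_Mapping.lookup e j else 0)"
proof -
  have "monomial_at n (scale_on C x z) e
          = (\<Prod>j\<in>{1..n}. x powi (if j \<in> C then Poly_Mapping.lookup e j else 0)) * monomial_at n z e"
    unfolding monomial_at_def scale_on_def prod.distrib[symmetric]
    by (rule prod.cong) (auto simp: power_int_mult_distrib)
  thus ?thesis using assms by (simp add: power_int_sum mult.commute)
qed

lemma leval_eq_0_if_scale_on:
  assumes "\<And>x. x \<noteq> 0 \<Longrightarrow> x \<noteq> 1 \<Longrightarrow> leval n g (scale_on C x z) = 0"
  shows "leval n g z = 0"
proof -
  let ?c = "\<lambda>e. Poly_Mapping.lookup g e * monomial_at n z e"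
  let ?d = "\<lambda>e. \<Sum>j\<in>{1..n}. if j \<in> C then Poly_Mapping.lookup e j else 0"
  have "(\<Sum>e\<in>Poly_Mapping.keys g. ?c e) = 0"
  proof (rule laurent_sum_eq_0_at_1[OF infinite_UNIV_kf finite_keys])
    fix x :: kf assume "x \<noteq> 0" "x \<noteq> 1"
    thus "(\<Sum>e\<in>Poly_Mapping.keys g. ?c e * x powi ?d e) = 0"
      using assms by (simp add: leval_eq_lin_ext lin_ext_def monomial_at_scale_on mult_ac)
  qed
  thus ?thesis by (simp add: leval_eq_lin_ext lin_ext_def)
qed

lemma chain_closed_chain:
  assumes wit: "Zwit n k r m z idx s" and l0: "l0 \<in> {1..m}"
  shows "chain_closed k m idx (idx l0 ` {1..k+1})"
  unfolding chain_closed_def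
proof (intro ballI)
  fix l a assume l: "l \<in> {1..m}" and a: "a \<in> {1..k}"
  show "idx l (a + 1) \<in> idx l0 ` {1..k+1} \<longleftrightarrow> idx l a \<in> idx l0 ` {1..k+1}"
  proof (cases "l = l0")
    case True
    have "a \<in> {1..k+1}" "a + 1 \<in> {1..k+1}" using a by auto
    thus ?thesis using True by simp
  next
    case False
    have "idx l b \<notin> idx l0 ` {1..k+1}" if "b \<in> {1..k+1}" for b
    proof
      assume "idx l b \<in> idx l0 ` {1..k+1}"
      then obtain c where "c \<in> {1..k+1}" "idx l b = idx l0 c" by (metis imageE)
      thus False using Zwit_inj[OF wit l l0 that] False by blast
    qed
    thus ?thesis using a by simp
  qed
qed

text \<open>If \<open>z\<^sub>i = z\<^sub>i\<^sub>+\<^sub>1\<close>, genericity puts \<open>i\<close> and \<open>i + 1\<close> in different chains (or \<open>i\<close> in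
  none), so scaling the chain through \<open>i\<close> separates them without leaving \<open>Z\<^sub>m\<close>.\<close>
lemma chain_closed_separating:
  assumes r: "2 \<le> r" and z: "nonzero_point n z" and wit: "Zwit n k r m z idx s"
    and zi: "z i = z (i + 1)"
  obtains C where "i \<in> C" "i + 1 \<notin> C" "chain_closed k m idx C"
proof (cases "\<exists>l\<in>{1..m}. \<exists>a\<in>{1..k+1}. idx l a = i")
  case True
  then obtain l0 a0 where l0: "l0 \<in> {1..m}" and a0: "a0 \<in> {1..k+1}" and "idx l0 a0 = i"
    by blast
  have "i + 1 \<notin> idx l0 ` {1..k+1}"
  proof
    assume "i + 1 \<in> idx l0 ` {1..k+1}"
    then obtain b0 where b0: "b0 \<in> {1..k+1}" "idx l0 b0 = i + 1" by (metis imageE)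
    hence "a0 \<noteq> b0" using \<open>idx l0 a0 = i\<close> by auto
    thus False using Zwit_chain_distinct[OF wit r z l0 a0 b0(1)] \<open>idx l0 a0 = i\<close> b0(2) zi by simp
  qed
  moreover have "i \<in> idx l0 ` {1..k+1}" using a0 \<open>idx l0 a0 = i\<close> by (metis imageI)
  ultimately show ?thesis using that chain_closed_chain[OF wit l0] by blast
next
  case False
  hence no_i: "idx l b \<noteq> i" if "l \<in> {1..m}" "b \<in> {1..k+1}" for l b
    using that by blast
  have "chain_closed k m idx {i}"
    unfolding chain_closed_def
  proof (intro ballI)
    fix l a assume "l \<in> {1..m}" "a \<in> {1..k}"
    thus "idx l (a + 1) \<in> {i} \<longleftrightarrow> idx l a \<in> {i}"
      using no_i[of l a] no_i[of l "a + 1"] by auto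
  qed
  with that[of "{i}"] show ?thesis by simp
qed

section \<open>Stability of the ideals\<close>

lemma leval_divided_difference:
  assumes f: "f \<in> Vset n" and i: "i \<in> {1..n-1}" and w: "nonzero_point n w"
    and g: "(xv i - xv (i + 1)) * g = xv (i + 1) * (sop i f - f)"
  shows "(w i - w (i + 1)) * leval n g w = w (i + 1) * (leval n f (w \<circ> swp i) - leval n f w)"
proof -
  have "leval n ((xv i - xv (i + 1)) * g) w = leval n (xv (i + 1) * (sop i f - f)) w"
    using g by simp
  moreover have "i \<in> {1..n}" "i + 1 \<in> {1..n}" using i by auto
  ultimately show ?thesis
    using w by (simp add: leval_mult leval_diff xv_def leval_xpow leval_sop[OF w f i] del: One_nat_def)
qed

lemma sqt_combination_eq_0:
  fixes x F G :: "'a::field"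
  assumes x: "x \<noteq> 0" "x\<^sup>2 \<noteq> 1" and rel: "(1 - x\<^sup>2) * G = x\<^sup>2 * F"
  shows "x * F + (x - inverse x) * G = 0"
proof -
  have key: "(x - inverse x) * x\<^sup>2 = - (x * (1 - x\<^sup>2))"
    using x(1) by (simp add: field_simps power2_eq_square)
  have "(1 - x\<^sup>2) * (x * F + (x - inverse x) * G)
          = x * (1 - x\<^sup>2) * F + (x - inverse x) * ((1 - x\<^sup>2) * G)"
    by (simp add: algebra_simps)
  also have "\<dots> = x * (1 - x\<^sup>2) * F + ((x - inverse x) * x\<^sup>2) * F"
    by (simp only: rel mult.assoc)
  also have "\<dots> = 0"
    unfolding key by (simp add: algebra_simps)
  finally show ?thesis using x(2) by simp
qed

text \<open>Away from tight pairs, \<open>f\<close> vanishes at both \<open>z\<close> and \<open>s\<^sub>i z\<close>, so the divided difference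
  vanishes wherever \<open>z\<^sub>i \<noteq> z\<^sub>i\<^sub>+\<^sub>1\<close>; the remaining points are limits of such points along a
  one-parameter scaling inside \<open>Z\<^sub>m\<close>.\<close>
lemma leval_divided_difference_eq_0:
  assumes r: "2 \<le> r" and f: "f \<in> Iideal n k r m" and i: "i \<in> {1..n-1}"
    and g: "(xv i - xv (i + 1)) * g = xv (i + 1) * (sop i f - f)"
    and z: "z \<in> Zset n k r m" and wit: "Zwit n k r m z idx s"
    and not_tight: "\<not> tight_pair k m idx s i"
  shows "leval n g z = 0"
proof -
  have fV: "f \<in> Vset n" using f by (simp add: Iideal_def)
  have vanish: "leval n g w = 0"
    if w: "w \<in> Zset n k r m" "Zwit n k r m w idx s" and "w i \<noteq> w (i + 1)" for w
  proof -
    have "nonzero_point n w" using w(1) Zset_iff by blast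
    moreover have "leval n f w = 0" "leval n f (w \<circ> swp i) = 0"
      using f w(1) Zset_swp[OF w i not_tight] by (simp_all add: Iideal_def)
    ultimately have "(w i - w (i + 1)) * leval n g w = 0"
      using leval_divided_difference[OF fV i _ g] by simp
    thus ?thesis using that(3) by simp
  qed
  show ?thesis
  proof (cases "z i = z (i + 1)")
    case True
    have nz: "nonzero_point n z" using z Zset_iff by blast
    obtain C where C: "i \<in> C" "i + 1 \<notin> C" "chain_closed k m idx C"
      using chain_closed_separating[OF r nz wit True] by blast
    show ?thesis
    proof (rule leval_eq_0_if_scale_on)
      fix x :: kf assume x: "x \<noteq> 0" "x \<noteq> 1"
      have "z i \<noteq> 0" using nz i by (auto simp: nonzero_point_def)
      hence "scale_on C x z i \<noteq> scale_on C x z (i + 1)" using C True x by (simp add: scale_on_def)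
      thus "leval n g (scale_on C x z) = 0" using vanish Zset_scale_on[OF z x(1) wit C(3)] by blast
    qed
  qed (use vanish z wit in blast)
qed

lemma leval_Top_eq_0:
  assumes r: "2 \<le> r" and f: "f \<in> Iideal n k r m" and i: "i \<in> {1..n-1}"
    and z: "z \<in> Zset n k r m"
  shows "leval n (Top k r i f) z = 0"
proof -
  have fV: "f \<in> Vset n" using f by (simp add: Iideal_def)
  obtain g where "g \<in> Vset n"
    and T: "Top k r i f = lconst (sqt k r) * sop i f + lconst (sqt k r - inverse (sqt k r)) * g"
    and g: "(xv i - xv (i + 1)) * g = xv (i + 1) * (sop i f - f)"
    using Top_eq_divided_difference[OF fV i] by blast
  obtain idx s where nz: "nonzero_point n z" and wit: "Zwit n k r m z idx s"
    using z Zset_iff by blast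
  let ?F = "leval n f (z \<circ> swp i)" and ?G = "leval n g z" and ?x = "sqt k r"
  have Top: "leval n (Top k r i f) z = ?x * ?F + (?x - inverse ?x) * ?G"
    using nz by (simp add: T leval_add leval_mult leval_lconst leval_sop[OF nz fV i])
  have f0: "leval n f z = 0" using f z by (simp add: Iideal_def)
  show ?thesis
  proof (cases "tight_pair k m idx s i")
    case True
    then obtain l a where l: "l \<in> {1..m}" and a: "a \<in> {1..k}"
      and e: "idx l a = i" "idx l (a + 1) = i + 1" "s l a = 0"
      unfolding tight_pair_def by blast
    have "z (i + 1) = z i * tt k r" using Zwit_step[OF wit l a] e by simp
    hence "z i * ((1 - ?x\<^sup>2) * ?G) = z i * (?x\<^sup>2 * ?F)"
      using leval_divided_difference[OF fV i nz g] f0 by (simp add: tt_def algebra_simps)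
    moreover have "z i \<noteq> 0" using nz i by (auto simp: nonzero_point_def)
    ultimately have "(1 - ?x\<^sup>2) * ?G = ?x\<^sup>2 * ?F" by simp
    moreover have "?x\<^sup>2 \<noteq> 1" using tt_neq_1[OF r] by (simp add: tt_def)
    ultimately show ?thesis unfolding Top by (intro sqt_combination_eq_0 sqt_nonzero)
  next
    case False
    have "?F = 0" using f Zset_swp[OF z wit i False] by (simp add: Iideal_def)
    moreover have "?G = 0" by (rule leval_divided_difference_eq_0[OF r f i g z wit False])
    ultimately show ?thesis using Top by simp
  qed
qed

lemma Iideal_add: "f \<in> Iideal n k r m \<Longrightarrow> g \<in> Iideal n k r m \<Longrightarrow> f + g \<in> Iideal n k r m"
  by (simp add: Iideal_def Vset_add leval_add)

lemma Iideal_mult: "c \<in> Vset n \<Longrightarrow> f \<in> Iideal n k r m \<Longrightarrow> c * f \<in> Iideal n k r m"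
  unfolding Iideal_def using Vset_mult leval_mult Zset_iff by fastforce

lemma Iideal_Top:
  assumes "2 \<le> r" and f: "f \<in> Iideal n k r m" and i: "i \<in> {1..n-1}"
  shows "Top k r i f \<in> Iideal n k r m"
proof -
  have fV: "f \<in> Vset n" using f by (simp add: Iideal_def)
  obtain g where "g \<in> Vset n"
    and "Top k r i f = lconst (sqt k r) * sop i f + lconst (sqt k r - inverse (sqt k r)) * g"
    using Top_eq_divided_difference[OF fV i] by blast
  hence "Top k r i f \<in> Vset n" by (simp add: Vset_add Vset_mult Vset_lconst Vset_sop[OF fV i])
  thus ?thesis using leval_Top_eq_0[OF assms] by (simp add: Iideal_def)
qed

lemma Iideal_Tinv:
  assumes "2 \<le> r" and f: "f \<in> Iideal n k r m" and i: "i \<in> {1..n-1}"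
  shows "Tinv k r i f \<in> Iideal n k r m"
  using Iideal_add[OF Iideal_Top[OF assms] Iideal_mult[OF Vset_lconst f, of "- _"]]
  by (simp add: Tinv_def lconst_def single_uminus)

lemma Iideal_omega:
  assumes k: "1 \<le> k" "k \<le> n - 1" and r: "2 \<le> r" and f: "f \<in> Iideal n k r m"
  shows "omega n k r f \<in> Iideal n k r m"
proof -
  have n: "1 \<le> n" using k by simp
  have "leval n (omega n k r f) z = 0" if "z \<in> Zset n k r m" for z
    using that f leval_omega[OF n] Zset_omega_pt[OF k r that] Zset_iff by (simp add: Iideal_def)
  thus ?thesis using f Vset_omega[OF n] by (simp add: Iideal_def)
qed

lemma Iideal_omega_inv:
  assumes k: "1 \<le> k" "k \<le> n - 1" and r: "2 \<le> r" and f: "f \<in> Iideal n k r m"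
  shows "omega_inv n k r f \<in> Iideal n k r m"
proof -
  have n: "1 \<le> n" using k by simp
  have "leval n (omega_inv n k r f) z = 0" if "z \<in> Zset n k r m" for z
    using that f leval_omega_inv[OF n] Zset_omega_inv_pt[OF k r that] Zset_iff
    by (simp add: Iideal_def)
  thus ?thesis using f Vset_omega_inv[OF n] by (simp add: Iideal_def)
qed

lemma foldr_comp_mem:
  "(\<And>h f. h \<in> set hs \<Longrightarrow> f \<in> A \<Longrightarrow> h f \<in> A) \<Longrightarrow> f \<in> A \<Longrightarrow> foldr (\<circ>) hs id f \<in> A"
  by (induct hs arbitrary: f) auto

lemma Iideal_Yop:
  assumes k: "1 \<le> k" "k \<le> n - 1" and r: "2 \<le> r" and i: "i \<in> {1..n}"
    and f: "f \<in> Iideal n k r m"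
  shows "Yop n k r i f \<in> Iideal n k r m"
proof -
  have "\<And>h g. h \<in> set (map (Top k r) [i..<n]) \<Longrightarrow> g \<in> Iideal n k r m \<Longrightarrow> h g \<in> Iideal n k r m"
    "\<And>h g. h \<in> set (map (Tinv k r) [1..<i]) \<Longrightarrow> g \<in> Iideal n k r m \<Longrightarrow> h g \<in> Iideal n k r m"
    using Iideal_Top[OF r] Iideal_Tinv[OF r] i by auto
  hence "foldr (\<circ>) (map (Top k r) [i..<n]) id
          (omega n k r (foldr (\<circ>) (map (Tinv k r) [1..<i]) id f)) \<in> Iideal n k r m"
    by (intro foldr_comp_mem Iideal_omega[OF k r] f)
  thus ?thesis by (simp add: Yop_def)
qed

lemma Iideal_Yinv:
  assumes k: "1 \<le> k" "k \<le> n - 1" and r: "2 \<le> r" and i: "i \<in> {1..n}"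
    and f: "f \<in> Iideal n k r m"
  shows "Yinv n k r i f \<in> Iideal n k r m"
proof -
  have "\<And>h g. h \<in> set (map (Top k r) (rev [1..<i])) \<Longrightarrow> g \<in> Iideal n k r m
          \<Longrightarrow> h g \<in> Iideal n k r m"
    "\<And>h g. h \<in> set (map (Tinv k r) (rev [i..<n])) \<Longrightarrow> g \<in> Iideal n k r m
          \<Longrightarrow> h g \<in> Iideal n k r m"
    using Iideal_Top[OF r] Iideal_Tinv[OF r] i by auto
  hence "foldr (\<circ>) (map (Top k r) (rev [1..<i])) id
          (omega_inv n k r (foldr (\<circ>) (map (Tinv k r) (rev [i..<n])) id f)) \<in> Iideal n k r m"
    by (intro foldr_comp_mem Iideal_omega_inv[OF k r] f)
  thus ?thesis by (simp add: Yinv_def)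
qed

theorem theorem6p1:
  fixes n k r m :: nat
  assumes "1 \<le> k" and "k \<le> n - 1" and "2 \<le> r" and "1 \<le> m"
    and "h \<in> hecke_ops n k r" and "f \<in> Iideal n k r m"
  shows "h f \<in> Iideal n k r m"
  using assms(5,6)
proof (induction arbitrary: f rule: hecke_ops.induct)
  case (gen_X i)
  thus ?case unfolding Xop_def by (intro Iideal_mult Vset_xpow)
next
  case (gen_Xinv i)
  thus ?case unfolding Xinv_def by (intro Iideal_mult Vset_xpow)
next
  case (gen_T j)
  thus ?case by (intro Iideal_Top assms(3))
next
  case (gen_Y i)
  thus ?case by (intro Iideal_Yop assms(1-3))
next
  case (gen_Yinv i)
  thus ?case by (intro Iideal_Yinv assms(1-3))
next
  case (scal c)
  thus ?case by (intro Iideal_mult Vset_lconst)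
next
  case (add h1 h2)
  thus ?case by (intro Iideal_add) auto
qed auto


end
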